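(* Let $n\ge1$, $k\ge1$, $\mathcal{D}=\{0,\ldots,n\}$. Every infinite sequence in $\mathcal{D}^{\mathbb{N}}$ obtained as an infinite concatenation $\mathbf{W}_{i_1}\mathbf{W}_{i_2}\mathbf{W}_{i_3}\cdots$ with $i_1,i_2,\ldots\in\{0,\ldots,n\}$ is $k$-simply normal.
   Context: Let $\mathbf{w}_0,\ldots,\mathbf{w}_{(n+1)^k-1}$ be the elements of $\mathcal{D}^k$ in strictly increasing lexicographic order. For $i=0,\ldots,n$ define $\mathbf{W}_i=\mathbf{w}_i\mathbf{w}_{i+1}\cdots\mathbf{w}_{(n+1)^k-1}\mathbf{w}_0\cdots\mathbf{w}_{i-1}$. For $\mathbf{b}\in\mathcal{D}^k$ and $\mathbf{a}\in\mathcal{D}^{\mathbb{N}}$ let $\mathrm{freq}_{\mathbf{b}}(\mathbf{a})=\lim_{m\to\infty}\frac{1}{m}\#\{1\le j\le m: a_j\cdots a_{j+k-1}=\mathbf{b}\}$ when the limit exists; $\mathbf{a}$ is $k$-simply normal if $\mathrm{freq}_{\mathbf{b}}(\mathbf{a})=(n+1)^{-k}$ for all $\mathbf{b}\in\mathcal{D}^k$. *)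

theory Defs
  imports "HOL-Analysis.Analysis" "HOL-Library.List_Lexorder"
begin

definition words :: "nat \<Rightarrow> nat \<Rightarrow> nat list set" where
  "words n k = {xs. length xs = k \<and> set xs \<subseteq> {0..n}}"

text \<open>The list w_0, ..., w_{(n+1)^k - 1} of all words of length k in strictly
  increasing lexicographic order.\<close>
definition wlist :: "nat \<Rightarrow> nat \<Rightarrow> nat list list" where
  "wlist n k = sorted_list_of_set (words n k)"

definition Wblock :: "nat \<Rightarrow> nat \<Rightarrow> nat \<Rightarrow> nat list" where
  "Wblock n k i = concat (drop i (wlist n k) @ take i (wlist n k))"

text \<open>Infinite concatenation L 0 L 1 L 2 ... of nonempty finite words, as a
  0-indexed sequence.\<close>
definition inf_concat :: "(nat \<Rightarrow> 'a list) \<Rightarrow> nat \<Rightarrow> 'a" where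
  "inf_concat L m =
     (let j = (LEAST j. m < (\<Sum>t\<le>j. length (L t)))
      in L j ! (m - (\<Sum>t<j. length (L t))))"

text \<open>Number of positions j < m (0-indexed; the paper's 1 \<le> j \<le> m) at which
  the block b occurs in a.\<close>
definition occ_count :: "(nat \<Rightarrow> nat) \<Rightarrow> nat list \<Rightarrow> nat \<Rightarrow> nat" where
  "occ_count a b m = card {j. j < m \<and> map (\<lambda>t. a (j + t)) [0..<length b] = b}"

definition k_simply_normal :: "nat \<Rightarrow> nat \<Rightarrow> (nat \<Rightarrow> nat) \<Rightarrow> bool" where
  "k_simply_normal n k a \<longleftrightarrow>
     (\<forall>b \<in> words n k.
        (\<lambda>m. real (occ_count a b m) / real m) \<longlonglongrightarrow> 1 / real (n + 1) ^ k)"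

end

theory Submission
  imports Defs
begin

text \<open>The word w_j is the k-digit base-(n+1) numeral of j, so every block W_c is a
  period-long segment of the periodic word obtained by writing the numerals 0, 1, 2, ...
  one after another. In that word, the length-k window starting r places into the
  numeral of j consists of the last k - r digits of j followed by the first r digits
  of j + 1; together they determine j + 1 modulo (n+1)^k, so as j runs through a
  period every word of length k appears exactly once for each r, i.e. k times per
  period. In W_{i_1} W_{i_2} ... a window running past the end of a block reads leading
  digits of w_{i_{t+1}}, which are zeros because i_{t+1} \<le> n, just like the leading
  digits of w_{i_t} that the periodic word would supply. Hence every block of length
  (n+1)^k k contributes exactly k occurrences of each word, and the frequency of each
  word tends to k / ((n+1)^k k).\<close>

section \<open>Fixed-length numerals and the list of all words\<close>

fun digits :: "nat \<Rightarrow> nat \<Rightarrow> nat \<Rightarrow> nat list" where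
  "digits B 0 x = []"
| "digits B (Suc k) x = (x div B ^ k mod B) # digits B k x"

lemma length_digits [simp]: "length (digits B k x) = k"
  by (induction k) auto

lemma set_digits_subset: "B > 0 \<Longrightarrow> set (digits B k x) \<subseteq> {..<B}"
  by (induction k) auto

lemma digits_append: "digits B (a + b) x = digits B a (x div B ^ b) @ digits B b x"
  by (induction a) (simp_all add: div_mult2_eq[symmetric] power_add mult.commute)

lemma digits_zero: "digits B k 0 = replicate k 0"
  by (induction k) auto

lemma mod_power_Suc_eq_iff:
  fixes B :: nat
  assumes "B > 0"
  shows "x mod B ^ Suc k = y mod B ^ Suc k \<longleftrightarrow>
    x div B ^ k mod B = y div B ^ k mod B \<and> x mod B ^ k = y mod B ^ k"
proof -
  have decompose: "z mod B ^ Suc k = B ^ k * (z div B ^ k mod B) + z mod B ^ k" for z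
    unfolding power_Suc2 by (rule mod_mult2_eq)
  have high: "z div B ^ k mod B = z mod B ^ Suc k div B ^ k" for z
    using decompose[of z] assms by simp
  have low: "z mod B ^ k = z mod B ^ Suc k mod B ^ k" for z
    by (simp add: mod_mod_cancel)
  show ?thesis
    using decompose high low by metis
qed

lemma digits_eq_iff:
  assumes "B > 0"
  shows "digits B k x = digits B k y \<longleftrightarrow> x mod B ^ k = y mod B ^ k"
proof (induction k)
  case (Suc k)
  then show ?case
    by (simp only: digits.simps list.inject mod_power_Suc_eq_iff[OF assms])
qed simp

lemma digits_mod_power: "B > 0 \<Longrightarrow> digits B k (x mod B ^ k) = digits B k x"
  by (simp add: digits_eq_iff)

lemma digits_less_digits:
  assumes "B > 0" "x < y" "y < B ^ k"
  shows "digits B k x < digits B k y"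
  using assms
proof (induction k arbitrary: x y)
  case (Suc k)
  have heads: "x div B ^ k \<le> y div B ^ k" "y div B ^ k < B"
    using Suc.prems by (simp_all add: div_le_mono less_mult_imp_div_less mult.commute)
  show ?case
  proof (cases "x div B ^ k = y div B ^ k")
    case True
    then have "x mod B ^ k < y mod B ^ k"
      using Suc.prems(2) by (metis div_mult_mod_eq nat_add_left_cancel_less)
    then have "digits B k x < digits B k y"
      using Suc.IH[of "x mod B ^ k" "y mod B ^ k"] Suc.prems(1) by (simp add: digits_mod_power)
    then show ?thesis
      using True by simp
  next
    case False
    then show ?thesis
      using heads by simp
  qed
qed simp

lemma words_eq_lists: "words n k = {xs. set xs \<subseteq> {0..n} \<and> length xs = k}"
  unfolding words_def by auto

lemma finite_words: "finite (words n k)"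
  by (simp add: words_eq_lists finite_lists_length_eq)

lemma card_words: "card (words n k) = (n + 1) ^ k"
  by (simp add: words_eq_lists card_lists_length_eq)

lemma bij_betw_words_if_inj:
  assumes "inj_on f {..<(n + 1) ^ k}" "f ` {..<(n + 1) ^ k} \<subseteq> words n k"
  shows "bij_betw f {..<(n + 1) ^ k} (words n k)"
  unfolding bij_betw_def
  using assms card_subset_eq[OF finite_words assms(2)] by (simp add: card_image card_words)

lemma digits_in_words: "digits (n + 1) k x \<in> words n k"
  using set_digits_subset[of "n + 1" k x] unfolding words_def by auto

lemma bij_betw_digits_words: "bij_betw (digits (n + 1) k) {..<(n + 1) ^ k} (words n k)"
proof (rule bij_betw_words_if_inj)
  show "inj_on (digits (n + 1) k) {..<(n + 1) ^ k}"
    by (rule inj_onI) (simp add: digits_eq_iff)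
qed (use digits_in_words in blast)

lemma wlist_eq: "wlist n k = map (digits (n + 1) k) [0..<(n + 1) ^ k]"
proof -
  let ?xs = "map (digits (n + 1) k) [0..<(n + 1) ^ k]"
  have "sorted_wrt (<) ?xs"
    unfolding sorted_wrt_map
    by (rule sorted_wrt_mono_rel[OF _ sorted_wrt_upt]) (simp add: digits_less_digits)
  moreover have "set ?xs = words n k"
    using bij_betw_digits_words[THEN bij_betw_imp_surj_on] by (simp add: atLeast0LessThan)
  moreover have "length ?xs = card (words n k)"
    by (simp add: card_words)
  ultimately show ?thesis
    unfolding wlist_def by (intro sorted_list_of_set_unique[OF finite_words, THEN iffD1] conjI)
qed

section \<open>Periodicity, rotations and frequencies\<close>

lemma periodic_mod:
  fixes f :: "nat \<Rightarrow> 'a"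
  assumes "\<And>x. f (x + L) = f x"
  shows "f (x mod L) = f x"
proof -
  have "f (y + q * L) = f y" for y q
  proof (induction q)
    case (Suc q)
    have "f (y + Suc q * L) = f (y + q * L + L)"
      by (simp add: algebra_simps)
    with Suc show ?case
      by (simp only: assms)
  qed simp
  from this[of "x mod L" "x div L"] show ?thesis
    by (simp add: mod_div_mult_eq)
qed

lemma sum_lessThan_add:
  fixes f :: "nat \<Rightarrow> 'a::comm_monoid_add"
  shows "(\<Sum>j<m + q. f j) = (\<Sum>j<m. f j) + (\<Sum>p<q. f (m + p))"
  using sum.atLeastLessThan_concat[of 0 m "m + q" f]
  by (simp add: sum.atLeastLessThan_shift_0 atLeast0LessThan comp_def)

lemma sum_lessThan_shift_periodic:
  fixes g :: "nat \<Rightarrow> 'a::cancel_comm_monoid_add"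
  assumes "\<And>x. g (x + L) = g x"
  shows "(\<Sum>p<L. g (c + p)) = (\<Sum>p<L. g p)"
proof (induction c)
  case (Suc c)
  have "g c + (\<Sum>p<L. g (Suc c + p)) = (\<Sum>p<Suc L. g (c + p))"
    using sum.lessThan_Suc_shift[of "\<lambda>p. g (c + p)" L] by simp
  also have "\<dots> = (\<Sum>p<L. g (c + p)) + g (c + L)"
    by (rule sum.lessThan_Suc)
  also have "\<dots> = (\<Sum>p<L. g (c + p)) + g c"
    by (simp only: assms)
  also have "\<dots> = g c + (\<Sum>p<L. g (c + p))"
    by (rule add.commute)
  finally show ?case
    using Suc by simp
qed simp

lemma concat_rotate_uniform:
  assumes "\<forall>w \<in> set ws. length w = k"
  shows "concat (rotate c ws) = rotate (c * k) (concat ws)"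
proof (induction c)
  case (Suc c)
  have rotate1_step: "concat (rotate1 vs) = rotate k (concat vs)"
    if "\<forall>w \<in> set vs. length w = k" for vs :: "'a list list"
  proof (cases vs)
    case (Cons w us)
    then have "rotate k (concat vs) = rotate (length w) (w @ concat us)"
      using that by simp
    then show ?thesis
      using Cons by (simp only: rotate_append) simp
  qed simp
  have "concat (rotate (Suc c) ws) = rotate k (concat (rotate c ws))"
    using rotate1_step[of "rotate c ws"] assms by simp
  then show ?case
    using Suc by (simp add: rotate_rotate add.commute)
qed simp

lemma inf_concat_uniform:
  assumes "\<And>t. length (L t) = l" "l > 0"
  shows "inf_concat L m = L (m div l) ! (m mod l)"
proof -
  have partial_sums: "(\<Sum>t\<le>j. length (L t)) = Suc j * l" "(\<Sum>t<j. length (L t)) = j * l" for j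
    using assms(1) by simp_all
  have "(LEAST j. m < Suc j * l) = m div l"
  proof (rule Least_equality)
    show "m < Suc (m div l) * l"
      using dividend_less_div_times[OF assms(2), of m] by simp
  next
    fix j
    assume "m < Suc j * l"
    then have "m div l < Suc j"
      by (rule less_mult_imp_div_less)
    then show "m div l \<le> j"
      by simp
  qed
  then show ?thesis
    unfolding inf_concat_def partial_sums Let_def by (simp add: minus_div_mult_eq_mod)
qed

definition window :: "(nat \<Rightarrow> 'a) \<Rightarrow> nat \<Rightarrow> nat \<Rightarrow> 'a list" where
  "window a j k = map (\<lambda>s. a (j + s)) [0..<k]"

lemma occ_count_eq_sum:
  assumes "length b = k"
  shows "occ_count a b m = (\<Sum>j<m. of_bool (window a j k = b))"
proof -
  have "occ_count a b m = card {j \<in> {..<m}. window a j k = b}"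
    unfolding occ_count_def window_def assms by (simp add: lessThan_def Collect_conj_eq)
  also have "\<dots> = (\<Sum>j<m. of_bool (window a j k = b))"
    by (simp add: sum.inter_filter[symmetric] of_bool_def)
  finally show ?thesis .
qed

lemma occ_count_mono: "mono (occ_count a b)"
  unfolding occ_count_def by (rule monoI, rule card_mono) auto

lemma ratio_dist_le_if_linear_on_multiples:
  fixes F :: "nat \<Rightarrow> nat"
  assumes "mono F" "\<And>t. F (t * L) = t * K" "L > 0" "m > 0"
  shows "\<bar>real (F m) / real m - real K / real L\<bar> \<le> real K / real m"
proof -
  define t where "t = m div L"
  have "t * L \<le> m" "m \<le> Suc t * L"
    using dividend_less_div_times[OF assms(3), of m] by (simp_all add: t_def add.commute)
  then have "t * K \<le> F m" "F m \<le> Suc t * K"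
    using assms(1,2) by (metis monoD)+
  then have "t * K * L \<le> F m * L" "F m * L \<le> t * K * L + K * L"
    and "t * K * L \<le> K * m" "K * m \<le> t * K * L + K * L"
    using mult_le_mono1[of "t * K" "F m" L] mult_le_mono1[of "F m" "Suc t * K" L]
      mult_le_mono2[of "t * L" m K] mult_le_mono2[of m "Suc t * L" K] \<open>t * L \<le> m\<close> \<open>m \<le> Suc t * L\<close>
    by (simp_all add: algebra_simps)
  then have "F m * L \<le> K * m + K * L" "K * m \<le> F m * L + K * L"
    by linarith+
  then have "real (F m * L) \<le> real (K * m + K * L)" "real (K * m) \<le> real (F m * L + K * L)"
    by (simp_all only: of_nat_le_iff)
  then have "\<bar>real (F m) * real L - real K * real m\<bar> \<le> real K * real L"
    unfolding abs_le_iff of_nat_add of_nat_mult by linarith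
  moreover have "\<bar>real (F m) / real m - real K / real L\<bar> =
      \<bar>real (F m) * real L - real K * real m\<bar> / (real m * real L)"
    using assms(3,4) by (simp add: field_simps)
  ultimately show ?thesis
    using assms(3,4) by (simp add: divide_le_eq field_simps)
qed

lemma ratio_tendsto_if_linear_on_multiples:
  fixes F :: "nat \<Rightarrow> nat"
  assumes "mono F" "\<And>t. F (t * L) = t * K" "L > 0"
  shows "(\<lambda>m. real (F m) / real m) \<longlonglongrightarrow> real K / real L"
proof (rule LIM_zero_cancel, rule Lim_null_comparison)
  show "\<forall>\<^sub>F m in sequentially. norm (real (F m) / real m - real K / real L) \<le> real K / real m"
    using eventually_gt_at_top[of 0]
    by eventually_elim (simp add: ratio_dist_le_if_linear_on_multiples[OF assms])
qed (rule lim_const_over_n)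

section \<open>The sequence of consecutive numerals\<close>

definition counter_seq :: "nat \<Rightarrow> nat \<Rightarrow> nat \<Rightarrow> nat" where
  "counter_seq B k u = digits B k (u div k) ! (u mod k)"

lemma counter_seq_mult_add: "r < k \<Longrightarrow> counter_seq B k (j * k + r) = digits B k j ! r"
  by (simp add: counter_seq_def)

lemma counter_seq_periodic:
  assumes "B > 0"
  shows "counter_seq B k (u + B ^ k * k) = counter_seq B k u"
proof (cases "k = 0")
  case False
  have "digits B k (u div k + B ^ k) = digits B k (u div k)"
    unfolding digits_eq_iff[OF assms] by simp
  moreover have "(u + B ^ k * k) div k = u div k + B ^ k" "(u + B ^ k * k) mod k = u mod k"
    using False by simp_all
  ultimately show ?thesis
    by (simp add: counter_seq_def)
qed simp

lemma concat_digits_upt: "concat (map (digits B k) [0..<N]) = map (counter_seq B k) [0..<N * k]"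
proof (induction N)
  case (Suc N)
  have "[0..<Suc N * k] = [0..<N * k] @ [N * k..<N * k + k]"
    using upt_add_eq_append[of 0 "N * k" k] by (simp add: add.commute)
  moreover have "map (counter_seq B k) [N * k..<N * k + k] = digits B k N"
    by (rule nth_equalityI) (simp_all add: counter_seq_mult_add)
  ultimately show ?case
    using Suc by simp
qed simp

lemma counter_seq_leading_zero:
  assumes "c \<le> n" "q + 1 < k"
  shows "counter_seq (n + 1) k (c * k + q) = 0"
proof -
  have "digits (n + 1) k c = digits (n + 1) (k - 1) (c div (n + 1)) @ digits (n + 1) 1 c"
    using digits_append[of "n + 1" "k - 1" 1 c] assms(2) by simp
  also have "\<dots> = replicate (k - 1) 0 @ [c]"
    using assms(1) by (simp add: digits_zero)
  finally show ?thesis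
    using assms(2) by (simp add: counter_seq_mult_add nth_append)
qed

lemma window_counter_seq_periodic:
  assumes "B > 0"
  shows "window (counter_seq B k) (u + B ^ k * k) k = window (counter_seq B k) u k"
  unfolding window_def
proof (rule map_cong[OF refl])
  fix s
  have "u + B ^ k * k + s = (u + s) + B ^ k * k"
    by simp
  then show "counter_seq B k (u + B ^ k * k + s) = counter_seq B k (u + s)"
    using counter_seq_periodic[OF assms] by presburger
qed

lemma window_counter_seq_in_words: "window (counter_seq (n + 1) k) u k \<in> words n k"
proof -
  have "counter_seq (n + 1) k v \<le> n" if "k > 0" for v
  proof -
    have "counter_seq (n + 1) k v \<in> set (digits (n + 1) k (v div k))"
      using that by (simp add: counter_seq_def)
    then show ?thesis
      using set_digits_subset[of "n + 1" k "v div k"] by auto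
  qed
  then show ?thesis
    by (auto simp: words_def window_def)
qed

lemma window_counter_seq:
  assumes "r < k"
  shows "window (counter_seq B k) (j * k + r) k = drop r (digits B k j) @ take r (digits B k (Suc j))"
proof (rule nth_equalityI)
  fix s
  assume "s < length (window (counter_seq B k) (j * k + r) k)"
  then have "s < k"
    by (simp add: window_def)
  show "window (counter_seq B k) (j * k + r) k ! s = (drop r (digits B k j) @ take r (digits B k (Suc j))) ! s"
  proof (cases "r + s < k")
    case True
    then have "s < k - r"
      by simp
    then show ?thesis
      using True by (simp add: window_def nth_append add.assoc counter_seq_mult_add)
  next
    case False
    have "window (counter_seq B k) (j * k + r) k ! s = counter_seq B k (j * k + r + s)"
      using \<open>s < k\<close> by (simp add: window_def)
    also have "j * k + r + s = Suc j * k + (s - (k - r))"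
      using False assms by simp
    also have "counter_seq B k (Suc j * k + (s - (k - r))) = digits B k (Suc j) ! (s - (k - r))"
      using \<open>s < k\<close> assms by (intro counter_seq_mult_add) linarith
    also have "\<dots> = (drop r (digits B k j) @ take r (digits B k (Suc j))) ! s"
    proof -
      have "\<not> s < k - r"
        using False by linarith
      then show ?thesis
        using \<open>s < k\<close> assms by (simp add: nth_append)
    qed
    finally show ?thesis .
  qed
qed (use assms in \<open>simp add: window_def\<close>)

lemma drop_take_digits_eq_imp_Suc_mod_eq:
  assumes "B > 0" "r \<le> k"
    and "drop r (digits B k x) @ take r (digits B k (Suc x)) = drop r (digits B k y) @ take r (digits B k (Suc y))"
  shows "Suc x mod B ^ k = Suc y mod B ^ k"
proof -
  define M where "M = B ^ (k - r)"
  have "digits B k z = digits B r (z div M) @ digits B (k - r) z" for z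
    using digits_append[of B r "k - r" z] assms(2) by (simp add: M_def)
  then have "digits B (k - r) x = digits B (k - r) y" "digits B r (Suc x div M) = digits B r (Suc y div M)"
    using assms(3) by simp_all
  then have low: "x mod M = y mod M" and high: "Suc x div M mod B ^ r = Suc y div M mod B ^ r"
    using assms(1) by (simp_all add: digits_eq_iff M_def)
  from low have "Suc x mod M = Suc y mod M"
    by (metis mod_Suc_eq)
  moreover have "B ^ k = M * B ^ r"
    using assms(2) by (simp add: M_def power_add[symmetric])
  ultimately show ?thesis
    using high by (simp add: mod_mult2_eq)
qed

lemma bij_betw_window_counter_seq:
  assumes "r < k"
  shows "bij_betw (\<lambda>j. window (counter_seq (n + 1) k) (j * k + r) k) {..<(n + 1) ^ k} (words n k)"
proof (rule bij_betw_words_if_inj)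
  show "inj_on (\<lambda>j. window (counter_seq (n + 1) k) (j * k + r) k) {..<(n + 1) ^ k}"
  proof (rule inj_onI)
    fix x y
    assume "x \<in> {..<(n + 1) ^ k}" "y \<in> {..<(n + 1) ^ k}"
      and "window (counter_seq (n + 1) k) (x * k + r) k = window (counter_seq (n + 1) k) (y * k + r) k"
    then have "Suc x mod (n + 1) ^ k = Suc y mod (n + 1) ^ k" "x < (n + 1) ^ k" "y < (n + 1) ^ k"
      using drop_take_digits_eq_imp_Suc_mod_eq[of "n + 1" r k x y] assms
      by (simp_all add: window_counter_seq)
    moreover have "Suc z mod (n + 1) ^ k = (if Suc z = (n + 1) ^ k then 0 else Suc z)"
      if "z < (n + 1) ^ k" for z
      using that by (simp add: Suc_lessI)
    ultimately show "x = y"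
      by (auto split: if_splits)
  qed
qed (use window_counter_seq_in_words in blast)

lemma sum_window_counter_seq:
  assumes "b \<in> words n k"
  shows "(\<Sum>u<(n + 1) ^ k * k. of_bool (window (counter_seq (n + 1) k) u k = b)) = k"
proof -
  let ?N = "(n + 1) ^ k" and ?f = "\<lambda>u. of_bool (window (counter_seq (n + 1) k) u k = b) :: nat"
  have "(\<Sum>u<?N * k. ?f u) = (\<Sum>j<?N. \<Sum>u\<in>{j * k..<j * k + k}. ?f u)"
    by (rule sum.nat_group[symmetric])
  also have "\<dots> = (\<Sum>j<?N. \<Sum>r<k. ?f (j * k + r))"
    by (simp add: sum.atLeastLessThan_shift_0 atLeast0LessThan)
  also have "\<dots> = (\<Sum>r<k. \<Sum>j<?N. ?f (j * k + r))"
    by (rule sum.swap)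
  also have "\<dots> = (\<Sum>r<k. \<Sum>w\<in>words n k. of_bool (w = b))"
  proof (rule sum.cong[OF refl])
    fix r
    assume "r \<in> {..<k}"
    then show "(\<Sum>j<?N. ?f (j * k + r)) = (\<Sum>w\<in>words n k. of_bool (w = b))"
      by (intro sum.reindex_bij_betw bij_betw_window_counter_seq) simp
  qed
  also have "\<dots> = k"
    using assms finite_words by simp
  finally show ?thesis .
qed

section \<open>Concatenations of the blocks W_i\<close>

lemma Wblock_eq_rotate:
  assumes "c < (n + 1) ^ k"
  shows "Wblock n k c = rotate (c * k) (map (counter_seq (n + 1) k) [0..<(n + 1) ^ k * k])"
proof -
  have "Wblock n k c = concat (rotate c (wlist n k))"
    using assms by (simp add: Wblock_def rotate_drop_take wlist_eq)
  also have "\<dots> = rotate (c * k) (concat (wlist n k))"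
    by (rule concat_rotate_uniform) (simp add: wlist_eq)
  finally show ?thesis
    by (simp add: wlist_eq concat_digits_upt)
qed

lemma length_Wblock: "c < (n + 1) ^ k \<Longrightarrow> length (Wblock n k c) = (n + 1) ^ k * k"
  by (simp add: Wblock_eq_rotate)

lemma nth_Wblock:
  assumes "c < (n + 1) ^ k" "p < (n + 1) ^ k * k"
  shows "Wblock n k c ! p = counter_seq (n + 1) k (c * k + p)"
proof -
  let ?L = "(n + 1) ^ k * k"
  have "(c * k + p) mod ?L < ?L"
    using assms(2) by (intro mod_less_divisor) linarith
  then have "Wblock n k c ! p = counter_seq (n + 1) k ((c * k + p) mod ?L)"
    using assms by (simp add: Wblock_eq_rotate nth_rotate)
  also have "\<dots> = counter_seq (n + 1) k (c * k + p)"
    by (rule periodic_mod) (simp add: counter_seq_periodic)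
  finally show ?thesis .
qed

lemma inf_concat_Wblock:
  assumes "\<And>t. i t \<le> n" "k \<ge> 1" "p < (n + 1) ^ k * k"
  shows "inf_concat (\<lambda>t. Wblock n k (i t)) (t * ((n + 1) ^ k * k) + p) =
    counter_seq (n + 1) k (i t * k + p)"
proof -
  define L where "L = (n + 1) ^ k * k"
  have "n < (n + 1) ^ k"
    using self_le_power[of "n + 1" k] assms(2) by simp
  then have block: "i t < (n + 1) ^ k" for t
    using assms(1) le_less_trans by blast
  have "L > 0" "p < L"
    using assms(2,3) by (simp_all add: L_def)
  have "inf_concat (\<lambda>t. Wblock n k (i t)) (t * L + p) =
      Wblock n k (i ((t * L + p) div L)) ! ((t * L + p) mod L)"
    by (rule inf_concat_uniform) (use block length_Wblock L_def \<open>L > 0\<close> in auto)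
  also have "\<dots> = Wblock n k (i t) ! p"
    using \<open>p < L\<close> by simp
  finally show ?thesis
    using assms(3) block nth_Wblock unfolding L_def by simp
qed

lemma window_inf_concat_Wblock:
  assumes "\<And>t. i t \<le> n" "k \<ge> 1" "p < (n + 1) ^ k * k"
  shows "window (inf_concat (\<lambda>t. Wblock n k (i t))) (t * ((n + 1) ^ k * k) + p) k =
    window (counter_seq (n + 1) k) (i t * k + p) k"
  unfolding window_def
proof (rule map_cong[OF refl])
  let ?a = "inf_concat (\<lambda>t. Wblock n k (i t))" and ?c = "counter_seq (n + 1) k"
  let ?L = "(n + 1) ^ k * k"
  fix s
  assume "s \<in> set [0..<k]"
  then have "s < k"
    by simp
  show "?a (t * ?L + p + s) = ?c (i t * k + p + s)"
  proof (cases "p + s < ?L")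
    case True
    then show ?thesis
      using inf_concat_Wblock[OF assms(1,2) True] by (simp add: add.assoc)
  next
    case False
    \<comment> \<open>The window runs into block Suc t; both sequences show leading zeros of a
      numeral \<le> n there.\<close>
    define q where "q = p + s - ?L"
    have "k \<le> ?L"
      using assms(2) by simp
    then have q: "q + 1 < k" "q < ?L" "p + s = ?L + q"
      using False assms(3) \<open>s < k\<close> unfolding q_def by linarith+
    have "?a (t * ?L + p + s) = ?a (Suc t * ?L + q)"
      by (rule arg_cong[where f = ?a]) (use q(3) in simp)
    also have "\<dots> = ?c (i (Suc t) * k + q)"
      by (rule inf_concat_Wblock[OF assms(1,2) q(2)])
    also have "\<dots> = ?c (i t * k + q)"
      by (simp only: counter_seq_leading_zero[OF assms(1) q(1)])
    also have "\<dots> = ?c (i t * k + q + ?L)"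
      using counter_seq_periodic[of "n + 1" k "i t * k + q"] by simp
    also have "\<dots> = ?c (i t * k + p + s)"
      by (rule arg_cong[where f = ?c]) (use q(3) in simp)
    finally show ?thesis .
  qed
qed

lemma occ_count_inf_concat_Wblock:
  assumes "\<And>t. i t \<le> n" "k \<ge> 1" "b \<in> words n k"
  shows "occ_count (inf_concat (\<lambda>t. Wblock n k (i t))) b (t * ((n + 1) ^ k * k)) = t * k"
proof (induction t)
  case 0
  then show ?case
    by (simp add: occ_count_def)
next
  case (Suc t)
  let ?a = "inf_concat (\<lambda>t. Wblock n k (i t))" and ?c = "counter_seq (n + 1) k"
  let ?L = "(n + 1) ^ k * k"
  have "length b = k"
    using assms(3) by (simp add: words_def)
  moreover have "Suc t * ?L = t * ?L + ?L"
    by simp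
  ultimately have "occ_count ?a b (Suc t * ?L) =
      occ_count ?a b (t * ?L) + (\<Sum>p<?L. of_bool (window ?a (t * ?L + p) k = b))"
    by (simp only: occ_count_eq_sum sum_lessThan_add)
  also have "(\<Sum>p<?L. of_bool (window ?a (t * ?L + p) k = b)) =
      (\<Sum>p<?L. of_bool (window ?c (i t * k + p) k = b) :: nat)"
  proof (rule sum.cong[OF refl])
    fix p
    assume "p \<in> {..<?L}"
    then show "of_bool (window ?a (t * ?L + p) k = b) = of_bool (window ?c (i t * k + p) k = b)"
      using window_inf_concat_Wblock[OF assms(1,2), where p = p and t = t] by simp
  qed
  also have "\<dots> = (\<Sum>p<?L. of_bool (window ?c p k = b))"
  proof -
    have "window ?c (x + ?L) k = window ?c x k" for x
      by (rule window_counter_seq_periodic) simp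
    then show ?thesis
      by (intro sum_lessThan_shift_periodic) simp
  qed
  also have "\<dots> = k"
    by (rule sum_window_counter_seq[OF assms(3)])
  finally show ?case
    using Suc by simp
qed

theorem proposition2p2:
  fixes n k :: nat and i :: "nat \<Rightarrow> nat"
  assumes "n \<ge> 1" and "k \<ge> 1"
    and "\<And>t. i t \<in> {0..n}"
  shows "k_simply_normal n k (inf_concat (\<lambda>t. Wblock n k (i t)))"
  unfolding k_simply_normal_def
proof
  fix b
  assume b: "b \<in> words n k"
  let ?a = "inf_concat (\<lambda>t. Wblock n k (i t))"
  have "i t \<le> n" for t
    using assms(3) by simp
  then have "(\<lambda>m. real (occ_count ?a b m) / real m) \<longlonglongrightarrow> real k / real ((n + 1) ^ k * k)"
    using assms(2) b
    by (intro ratio_tendsto_if_linear_on_multiples occ_count_mono occ_count_inf_concat_Wblock) simp_all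
  also have "real k / real ((n + 1) ^ k * k) = 1 / real (n + 1) ^ k"
    using assms(2) by simp
  finally show "(\<lambda>m. real (occ_count ?a b m) / real m) \<longlonglongrightarrow> 1 / real (n + 1) ^ k" .
qed

end
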